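(* Let $n\ge2$ and $\mathbb{P}\in\mathcal{C}_n$. Then \[ R_n(\mathbb{P})=\sup_{x,y\in\mathbb{R}_{++}}\phi^{\mathbb{P}}(x,y). \]
   Context: Scheduling on two machines with $n$ tasks. A processing-time matrix is $T\in\mathbb{R}_{++}^{2\times n}$; an allocation is $X\in\{0,1\}^{2\times n}$ with $X_{1j}+X_{2j}=1$; makespan $M(X,T)=\max_{i\in\{1,2\}}\sum_jX_{ij}T_{ij}$; $M^*(T)=\min_XM(X,T)$. $\mathcal{P}_n$ is the set of Borel probability measures on $\mathbb{R}^n$ supported in $\mathbb{R}_{++}^n$. For $\mathbb{P}\in\mathcal{P}_n$, algorithm $\mathcal{A}^{\mathbb{P}}$ draws $\mathbf{z}\sim\mathbb{P}$ and sends task $j$ to machine 1 iff $T_{1j}/T_{2j}<z_j$ (else to machine 2); $M(\mathbb{P},T)$ is its expected makespan and $R_n(\mathbb{P})=\sup_{T\in\mathbb{R}_{++}^{2\times n}}M(\mathbb{P},T)/M^*(T)\in[1,\infty]$. $\mathcal{C}_n$ is the set of $\mathbb{P}\in\mathcal{P}_n$ invariant under permutations of coordinates. For $\mathbb{P}\in\mathcal{C}_n$ let $F_{\mathbb{P}}(x)=\mathbf{P}_{\mathbf{z}\sim\mathbb{P}}[z_1\le x]$ and $H_{\mathbb{P}}(x,y)=\mathbf{P}_{\mathbf{z}\sim\mathbb{P}}[z_1\le x,z_2\le y]$, and \[ \phi^{\mathbb{P}}(x,y)=1+y-\min\{1,1-\tfrac1x+y\}F_{\mathbb{P}}(x)-yF_{\mathbb{P}}(y)+\min\{1+\tfrac1x,1+y\}H_{\mathbb{P}}(x,y).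 \] *)

theory Defs
  imports "HOL-Probability.Probability"
begin

text \<open>A processing-time matrix T is given by its two rows
  t1, t2 (machine 1 and machine 2); only the values on {..<n} matter.
  An allocation is the set S of tasks sent to machine 1 (the rest go to machine 2).\<close>

definition makespan :: "nat \<Rightarrow> (nat \<Rightarrow> real) \<Rightarrow> (nat \<Rightarrow> real) \<Rightarrow> nat set \<Rightarrow> real" where
  "makespan n t1 t2 S = max (\<Sum>j\<in>S. t1 j) (\<Sum>j\<in>{..<n} - S. t2 j)"

definition opt_makespan :: "nat \<Rightarrow> (nat \<Rightarrow> real) \<Rightarrow> (nat \<Rightarrow> real) \<Rightarrow> real" where
  "opt_makespan n t1 t2 = Min (makespan n t1 t2 ` Pow {..<n})"

definition pos_matrix :: "nat \<Rightarrow> (nat \<Rightarrow> real) \<Rightarrow> (nat \<Rightarrow> real) \<Rightarrow> bool" where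
  "pos_matrix n t1 t2 \<longleftrightarrow> (\<forall>j<n. 0 < t1 j \<and> 0 < t2 j)"

definition alloc :: "nat \<Rightarrow> (nat \<Rightarrow> real) \<Rightarrow> (nat \<Rightarrow> real) \<Rightarrow> (nat \<Rightarrow> real) \<Rightarrow> nat set" where
  "alloc n t1 t2 z = {j\<in>{..<n}. t1 j / t2 j < z j}"

text \<open>The set P_n: Borel probability measures on R^n (R^n = functions on {..<n}) concentrated on
  the open positive orthant.\<close>
definition Pn :: "nat \<Rightarrow> (nat \<Rightarrow> real) measure \<Rightarrow> bool" where
  "Pn n P \<longleftrightarrow> prob_space P \<and> sets P = sets (PiM {..<n} (\<lambda>_. borel))
      \<and> (AE z in P. \<forall>j<n. 0 < z j)"

definition Cn :: "nat \<Rightarrow> (nat \<Rightarrow> real) measure \<Rightarrow> bool" where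
  "Cn n P \<longleftrightarrow> Pn n P \<and>
     (\<forall>\<sigma>. \<sigma> permutes {..<n} \<longrightarrow> distr P (PiM {..<n} (\<lambda>_. borel)) (\<lambda>z. z \<circ> \<sigma>) = P)"

definition exp_makespan :: "nat \<Rightarrow> (nat \<Rightarrow> real) measure \<Rightarrow> (nat \<Rightarrow> real) \<Rightarrow> (nat \<Rightarrow> real) \<Rightarrow> real" where
  "exp_makespan n P t1 t2 = (\<integral>z. makespan n t1 t2 (alloc n t1 t2 z) \<partial>P)"

definition approx_ratio :: "nat \<Rightarrow> (nat \<Rightarrow> real) measure \<Rightarrow> ereal" where
  "approx_ratio n P = (SUP t\<in>{(t1, t2). pos_matrix n t1 t2}.
      ereal (exp_makespan n P (fst t) (snd t) / opt_makespan n (fst t) (snd t)))"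

definition cdfF :: "(nat \<Rightarrow> real) measure \<Rightarrow> real \<Rightarrow> real" where
  "cdfF P x = measure P {z\<in>space P. z 0 \<le> x}"

definition cdfH :: "(nat \<Rightarrow> real) measure \<Rightarrow> real \<Rightarrow> real \<Rightarrow> real" where
  "cdfH P x y = measure P {z\<in>space P. z 0 \<le> x \<and> z 1 \<le> y}"

definition phi :: "(nat \<Rightarrow> real) measure \<Rightarrow> real \<Rightarrow> real \<Rightarrow> real" where
  "phi P x y = 1 + y - min 1 (1 - 1 / x + y) * cdfF P x - y * cdfF P y
       + min (1 + 1 / x) (1 + y) * cdfH P x y"

end

theory Submission imports Defs begin

text \<open>Let \<open>S\<close> be an optimal allocation, with loads \<open>\<alpha>\<close> on machine 1 and \<open>\<beta>\<close> on machine 2, so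
  that the optimum is \<open>max \<alpha> \<beta>\<close>. Weighting each pair \<open>(i, j) \<in> S \<times> S\<^sup>c\<close> by
  \<open>(t1 i / \<alpha>) (t2 j / \<beta>)\<close> writes both machine loads of the threshold allocation as convex
  combinations of pair terms, and each pair term is at most \<open>max \<alpha> \<beta>\<close> times the makespan of the
  two-task instance with ratios \<open>t1 i / t2 i\<close> and \<open>t1 j / t2 j\<close>. By exchangeability the expected
  makespan of that instance is \<open>\<phi>\<close>, which gives \<open>R\<^sub>n \<le> sup \<phi>\<close>; if \<open>S\<close> or its complement is
  empty, an arbitrary second task takes the role of the empty side with weight 0.
  Conversely, the two-task instance with ratios \<open>x\<close>, \<open>y\<close>, padded by tasks of size \<open>\<delta>\<close>, has
  optimum at most \<open>1 + n \<delta>\<close> and expected makespan at least \<open>\<phi> x y\<close>; let \<open>\<delta> \<rightarrow> 0\<close>.\<close>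

abbreviation borel_vec :: "nat \<Rightarrow> (nat \<Rightarrow> real) measure" where
  "borel_vec n \<equiv> PiM {..<n} (\<lambda>_. borel)"

lemma Cn_prob_space: "Cn n P \<Longrightarrow> prob_space P"
  by (simp add: Cn_def Pn_def)

lemma Cn_sets: "Cn n P \<Longrightarrow> sets P = sets (borel_vec n)"
  by (simp add: Cn_def Pn_def)

lemma measurable_coordinate_Cn:
  assumes "Cn n P" "k < n"
  shows "(\<lambda>z. z k) \<in> borel_measurable P"
  using measurable_cong_sets[OF Cn_sets[OF assms(1)] refl] assms(2)
  by (auto intro: measurable_component_singleton)

lemma measurable_permute_coordinates:
  assumes "\<sigma> permutes {..<n}"
  shows "(\<lambda>z. z \<circ> \<sigma>) \<in> borel_vec n \<rightarrow>\<^sub>M borel_vec n"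
  unfolding comp_def
proof (rule measurable_PiM_single')
  show "(\<lambda>z. z (\<sigma> i)) \<in> borel_measurable (borel_vec n)" if "i \<in> {..<n}" for i
    using permutes_in_image[OF assms] that by (auto intro: measurable_component_singleton)
  show "(\<lambda>z i. z (\<sigma> i)) \<in> space (borel_vec n) \<rightarrow> (\<Pi>\<^sub>E i\<in>{..<n}. space borel)"
    using assms by (auto simp: space_PiM PiE_iff extensional_def permutes_not_in)
qed

lemma Cn_measure_permute:
  assumes "Cn n P" "\<sigma> permutes {..<n}" "{z\<in>space (borel_vec n). Q z} \<in> sets (borel_vec n)"
  shows "measure P {z\<in>space P. Q (z \<circ> \<sigma>)} = measure P {z\<in>space P. Q z}"
proof -
  have sp: "space P = space (borel_vec n)"
    using Cn_sets[OF assms(1)] by (rule sets_eq_imp_space_eq)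
  have m: "(\<lambda>z. z \<circ> \<sigma>) \<in> P \<rightarrow>\<^sub>M borel_vec n"
    using measurable_permute_coordinates[OF assms(2)] measurable_cong_sets[OF Cn_sets[OF assms(1)] refl]
    by blast
  have "measure P {z\<in>space P. Q z} = measure (distr P (borel_vec n) (\<lambda>z. z \<circ> \<sigma>)) {z\<in>space P. Q z}"
    using assms(1,2) by (simp add: Cn_def)
  also have "\<dots> = measure P {z\<in>space P. Q (z \<circ> \<sigma>)}"
    using measure_distr[OF m assms(3)] measurable_space[OF m] sp by (auto intro!: arg_cong[where f="measure P"])
  finally show ?thesis ..
qed

lemma permutes_pair_exists:
  fixes n :: nat
  assumes "i < n" "j < n" "i \<noteq> j" "1 < n"
  obtains \<sigma> where "\<sigma> permutes {..<n}" "\<sigma> 0 = i" "\<sigma> 1 = j"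
proof -
  define \<tau> where "\<tau> = Transposition.transpose 0 i"
  have "\<tau> j \<noteq> 0" "\<tau> j < n"
    using assms by (auto simp: \<tau>_def Transposition.transpose_def)
  then have "\<tau> \<circ> Transposition.transpose 1 (\<tau> j) permutes {..<n}"
    unfolding \<tau>_def using assms by (intro permutes_compose permutes_swap_id) auto
  moreover have "(\<tau> \<circ> Transposition.transpose 1 (\<tau> j)) 0 = i" "(\<tau> \<circ> Transposition.transpose 1 (\<tau> j)) 1 = j"
    using \<open>\<tau> j \<noteq> 0\<close> assms(3) by (auto simp: \<tau>_def Transposition.transpose_def)
  ultimately show ?thesis by (rule that)
qed

lemma Cn_cdfF:
  assumes "Cn n P" "i < n"
  shows "measure P {z\<in>space P. z i \<le> x} = cdfF P x"
proof -
  have [measurable]: "(\<lambda>z. z 0) \<in> borel_measurable (borel_vec n)"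
    using assms(2) by (auto intro: measurable_component_singleton)
  have "{z\<in>space (borel_vec n). z 0 \<le> x} \<in> sets (borel_vec n)"
    by measurable
  from Cn_measure_permute[OF assms(1) _ this, of "Transposition.transpose 0 i"] assms(2)
  show ?thesis by (simp add: cdfF_def permutes_swap_id)
qed

lemma Cn_cdfH:
  assumes "Cn n P" "i < n" "j < n" "i \<noteq> j"
  shows "measure P {z\<in>space P. z i \<le> x \<and> z j \<le> y} = cdfH P x y"
proof -
  have "1 < n" using assms(2-4) by linarith
  then obtain \<sigma> where \<sigma>: "\<sigma> permutes {..<n}" "\<sigma> 0 = i" "\<sigma> 1 = j"
    using permutes_pair_exists assms(2-4) by blast
  have [measurable]: "(\<lambda>z. z 0) \<in> borel_measurable (borel_vec n)"
      "(\<lambda>z. z 1) \<in> borel_measurable (borel_vec n)"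
    using \<open>1 < n\<close> by (auto intro: measurable_component_singleton)
  have "{z\<in>space (borel_vec n). z 0 \<le> x \<and> z 1 \<le> y} \<in> sets (borel_vec n)"
    by measurable
  from Cn_measure_permute[OF assms(1) \<sigma>(1) this] \<sigma>(2,3) show ?thesis
    by (simp add: cdfH_def)
qed

text \<open>The makespan of the threshold algorithm on the two-task instance with processing times
  \<open>T = [[1, y], [1/x, 1]]\<close> (task ratios \<open>x\<close> and \<open>y\<close>) and thresholds \<open>u\<close>, \<open>v\<close>.\<close>

definition pair_makespan :: "real \<Rightarrow> real \<Rightarrow> real \<Rightarrow> real \<Rightarrow> real" where
  "pair_makespan x y u v =
     max (of_bool (x < u) + y * of_bool (y < v)) (of_bool (\<not> x < u) / x + of_bool (\<not> y < v))"

lemma pair_makespan_nonneg: "0 < x \<Longrightarrow> 0 \<le> y \<Longrightarrow> 0 \<le> pair_makespan x y u v"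
  by (simp add: pair_makespan_def max_def)

lemma pair_makespan_eq:
  assumes "0 < x" "0 < y"
  shows "pair_makespan x y u v = 1 + y - min 1 (1 - 1 / x + y) * of_bool (u \<le> x)
     - y * of_bool (v \<le> y) + min (1 + 1 / x) (1 + y) * of_bool (u \<le> x \<and> v \<le> y)"
proof -
  have "0 < 1 / x" using assms by simp
  then show ?thesis
    using assms by (cases "u \<le> x"; cases "v \<le> y") (auto simp: pair_makespan_def min_def max_def)
qed

lemma Cn_has_integral_pair_makespan:
  assumes Cn: "Cn n P" and ij: "i < n" "j < n" "i \<noteq> j" and xy: "0 < x" "0 < y"
  shows "has_bochner_integral P (\<lambda>z. pair_makespan x y (z i) (z j)) (phi P x y)"
proof -
  interpret prob_space P using Cn_prob_space[OF Cn] .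
  note [measurable] = measurable_coordinate_Cn[OF Cn ij(1)] measurable_coordinate_Cn[OF Cn ij(2)]
  define A where "A = {z\<in>space P. z i \<le> x}"
  define B where "B = {z\<in>space P. z j \<le> y}"
  define C where "C = {z\<in>space P. z i \<le> x \<and> z j \<le> y}"
  have [measurable]: "A \<in> sets P" "B \<in> sets P" "C \<in> sets P"
    unfolding A_def B_def C_def by measurable
  define c1 where "c1 = min 1 (1 - 1 / x + y)"
  define c2 where "c2 = min (1 + 1 / x) (1 + y)"
  define g where "g z = (1 + y) * indicator (space P) z - c1 * indicator A z - y * indicator B z
    + c2 * indicator C z" for z
  have "has_bochner_integral P g
      ((1 + y) * measure P (space P) - c1 * measure P A - y * measure P B + c2 * measure P C)"
    unfolding g_def
    by (intro has_bochner_integral_add has_bochner_integral_diff has_bochner_integral_mult_right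
        has_bochner_integral_real_indicator) (auto simp: less_top[symmetric])
  also have "(1 + y) * measure P (space P) - c1 * measure P A - y * measure P B + c2 * measure P C
      = phi P x y"
    using Cn_cdfF[OF Cn ij(1)] Cn_cdfF[OF Cn ij(2)] Cn_cdfH[OF Cn ij]
    by (simp add: phi_def A_def B_def C_def c1_def c2_def prob_space)
  finally show ?thesis
    by (rule has_bochner_integral_cong[OF refl _ refl, THEN iffD2, rotated])
      (simp add: g_def pair_makespan_eq[OF xy] A_def B_def C_def c1_def c2_def indicator_def)
qed

lemma Cn_phi_nonneg:
  assumes "Cn n P" "2 \<le> n" "0 < x" "0 < y"
  shows "0 \<le> phi P x y"
proof -
  have "has_bochner_integral P (\<lambda>z. pair_makespan x y (z 0) (z 1)) (phi P x y)"
    using assms by (intro Cn_has_integral_pair_makespan) auto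
  moreover have "0 \<le> (\<integral>z. pair_makespan x y (z 0) (z 1) \<partial>P)"
    using assms(3,4) by (intro Bochner_Integration.integral_nonneg) (simp add: pair_makespan_nonneg)
  ultimately show ?thesis
    by (simp add: has_bochner_integral_integral_eq)
qed

lemma pair_makespan_bound:
  assumes "0 \<le> \<alpha>" "\<alpha> \<le> m" "0 \<le> \<beta>" "\<beta> \<le> m" "0 < x" "0 \<le> y"
  shows "max (\<alpha> * of_bool (x < u) + \<beta> * (y * of_bool (y < v)))
             (\<alpha> * (of_bool (\<not> x < u) / x) + \<beta> * of_bool (\<not> y < v))
           \<le> m * pair_makespan x y u v"
proof -
  have "max (\<alpha> * of_bool (x < u) + \<beta> * (y * of_bool (y < v)))
             (\<alpha> * (of_bool (\<not> x < u) / x) + \<beta> * of_bool (\<not> y < v))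
      \<le> max (m * of_bool (x < u) + m * (y * of_bool (y < v)))
             (m * (of_bool (\<not> x < u) / x) + m * of_bool (\<not> y < v))"
    using assms by (intro max.mono add_mono mult_right_mono) auto
  also have "\<dots> = m * pair_makespan x y u v"
    using assms by (simp add: pair_makespan_def max_mult_distrib_left distrib_left)
  finally show ?thesis .
qed

lemma makespan_alloc:
  "makespan n t1 t2 (alloc n t1 t2 z) =
     max (\<Sum>k<n. t1 k * of_bool (t1 k / t2 k < z k)) (\<Sum>k<n. t2 k * of_bool (\<not> t1 k / t2 k < z k))"
  by (auto simp: makespan_def alloc_def intro!: arg_cong2[where f=max] sum.cong)

lemma Cn_integrable_makespan_alloc:
  assumes "Cn n P"
  shows "integrable P (\<lambda>z. makespan n t1 t2 (alloc n t1 t2 z))"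
proof -
  interpret prob_space P using Cn_prob_space[OF assms] .
  have "integrable P (\<lambda>z. of_bool (c < z k) :: real)" if "k < n" for c k
  proof (rule integrable_const_bound[where B=1])
    note [measurable] = measurable_coordinate_Cn[OF assms that]
    show "(\<lambda>z. of_bool (c < z k) :: real) \<in> borel_measurable P"
      by measurable
  qed simp
  then show ?thesis
    unfolding makespan_alloc
    by (intro integrable_max integrable_sum integrable_mult_right)
      (auto simp del: sum_mult_of_bool_eq simp: of_bool_not_iff)
qed

lemma sum_product_mixture:
  fixes a b f g :: "_ \<Rightarrow> real"
  assumes "sum a A = 1" "sum b B = 1"
  shows "(\<Sum>\<kappa>\<in>A \<times> B. a (fst \<kappa>) * b (snd \<kappa>) * (f (fst \<kappa>) + g (snd \<kappa>)))
    = (\<Sum>i\<in>A. a i * f i) + (\<Sum>j\<in>B. b j * g j)"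
proof -
  have "(\<Sum>\<kappa>\<in>A \<times> B. a (fst \<kappa>) * b (snd \<kappa>) * (f (fst \<kappa>) + g (snd \<kappa>)))
      = (\<Sum>i\<in>A. \<Sum>j\<in>B. a i * f i * b j) + (\<Sum>i\<in>A. \<Sum>j\<in>B. b j * g j * a i)"
    by (simp add: sum.cartesian_product split_beta sum.distrib[symmetric] algebra_simps)
  also have "\<dots> = (\<Sum>i\<in>A. a i * f i) + (\<Sum>j\<in>B. b j * g j)"
    using assms
    by (simp add: sum.swap[of "\<lambda>i j. b j * g j * a i"] sum_distrib_left[symmetric])
  finally show ?thesis .
qed

lemma Cn_exp_makespan_le_mixture:
  fixes w x y :: "'k \<Rightarrow> real" and i j :: "'k \<Rightarrow> nat"
  assumes Cn: "Cn n P" and phi_le: "\<And>u v. 0 < u \<Longrightarrow> 0 < v \<Longrightarrow> phi P u v \<le> c"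
    and K: "finite K" "\<And>\<kappa>. \<kappa> \<in> K \<Longrightarrow> 0 \<le> w \<kappa>" "sum w K = 1"
    and pairs: "\<And>\<kappa>. \<kappa> \<in> K \<Longrightarrow> i \<kappa> < n \<and> j \<kappa> < n \<and> i \<kappa> \<noteq> j \<kappa> \<and> 0 < x \<kappa> \<and> 0 < y \<kappa>"
    and \<alpha>\<beta>: "0 \<le> \<alpha>" "\<alpha> \<le> m" "0 \<le> \<beta>" "\<beta> \<le> m"
    and load1: "\<And>z. (\<Sum>k<n. t1 k * of_bool (t1 k / t2 k < z k)) = (\<Sum>\<kappa>\<in>K. w \<kappa> *
      (\<alpha> * of_bool (x \<kappa> < z (i \<kappa>)) + \<beta> * (y \<kappa> * of_bool (y \<kappa> < z (j \<kappa>)))))"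
    and load2: "\<And>z. (\<Sum>k<n. t2 k * of_bool (\<not> t1 k / t2 k < z k)) = (\<Sum>\<kappa>\<in>K. w \<kappa> *
      (\<alpha> * (of_bool (\<not> x \<kappa> < z (i \<kappa>)) / x \<kappa>) + \<beta> * of_bool (\<not> y \<kappa> < z (j \<kappa>))))"
  shows "exp_makespan n P t1 t2 \<le> m * c"
proof -
  interpret prob_space P using Cn_prob_space[OF Cn] .
  define g where "g \<kappa> z = pair_makespan (x \<kappa>) (y \<kappa>) (z (i \<kappa>)) (z (j \<kappa>))" for \<kappa> z
  have mixture_integral: "has_bochner_integral P (\<lambda>z. m * (\<Sum>\<kappa>\<in>K. w \<kappa> * g \<kappa> z))
      (m * (\<Sum>\<kappa>\<in>K. w \<kappa> * phi P (x \<kappa>) (y \<kappa>)))"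
    unfolding g_def using pairs
    by (intro has_bochner_integral_mult_right has_bochner_integral_sum
        Cn_has_integral_pair_makespan[OF Cn]) auto
  have pointwise: "makespan n t1 t2 (alloc n t1 t2 z) \<le> m * (\<Sum>\<kappa>\<in>K. w \<kappa> * g \<kappa> z)" for z
  proof -
    let ?A = "\<lambda>\<kappa>. \<alpha> * of_bool (x \<kappa> < z (i \<kappa>)) + \<beta> * (y \<kappa> * of_bool (y \<kappa> < z (j \<kappa>)))"
    let ?B = "\<lambda>\<kappa>. \<alpha> * (of_bool (\<not> x \<kappa> < z (i \<kappa>)) / x \<kappa>) + \<beta> * of_bool (\<not> y \<kappa> < z (j \<kappa>))"
    have "makespan n t1 t2 (alloc n t1 t2 z) = max (\<Sum>\<kappa>\<in>K. w \<kappa> * ?A \<kappa>) (\<Sum>\<kappa>\<in>K. w \<kappa> * ?B \<kappa>)"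
      unfolding makespan_alloc load1 load2 ..
    also have "\<dots> \<le> (\<Sum>\<kappa>\<in>K. w \<kappa> * max (?A \<kappa>) (?B \<kappa>))"
      using K(2) by (intro max.boundedI sum_mono mult_left_mono) auto
    also have "\<dots> \<le> (\<Sum>\<kappa>\<in>K. w \<kappa> * (m * g \<kappa> z))"
      unfolding g_def using K(2) pairs \<alpha>\<beta>
      by (intro sum_mono mult_left_mono pair_makespan_bound) (auto simp: less_imp_le)
    finally show ?thesis
      by (simp add: sum_distrib_left ac_simps)
  qed
  have "exp_makespan n P t1 t2 \<le> m * (\<Sum>\<kappa>\<in>K. w \<kappa> * phi P (x \<kappa>) (y \<kappa>))"
    unfolding exp_makespan_def has_bochner_integral_integral_eq[OF mixture_integral, symmetric]
    by (intro integral_mono Cn_integrable_makespan_alloc[OF Cn] pointwise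
        integrable.intros[OF mixture_integral])
  also have "\<dots> \<le> m * (\<Sum>\<kappa>\<in>K. w \<kappa> * c)"
    using K(2) pairs phi_le \<alpha>\<beta> by (intro mult_left_mono sum_mono) auto
  also have "\<dots> = m * c"
    using K(3) by (simp add: sum_distrib_right[symmetric])
  finally show ?thesis .
qed

lemma sum_eq_product_mixture:
  fixes h t1 t2 :: "nat \<Rightarrow> real" and S :: "nat set" and n :: nat
  defines "\<alpha> \<equiv> sum t1 S" and "\<beta> \<equiv> sum t2 ({..<n} - S)"
  assumes S: "S \<subseteq> {..<n}" and t_nz: "\<And>k. k < n \<Longrightarrow> t1 k \<noteq> 0 \<and> t2 k \<noteq> 0"
    and "\<alpha> \<noteq> 0" "\<beta> \<noteq> 0"
  shows "(\<Sum>k<n. h k) = (\<Sum>\<kappa>\<in>S \<times> ({..<n} - S). t1 (fst \<kappa>) / \<alpha> * (t2 (snd \<kappa>) / \<beta>) *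
      (\<alpha> * (h (fst \<kappa>) / t1 (fst \<kappa>)) + \<beta> * (h (snd \<kappa>) / t2 (snd \<kappa>))))"
proof -
  have "(\<Sum>i\<in>S. t1 i / \<alpha>) = 1" "(\<Sum>j\<in>{..<n} - S. t2 j / \<beta>) = 1"
    using assms by (simp_all add: sum_divide_distrib[symmetric])
  note mixture = sum_product_mixture[OF this, of "\<lambda>i. \<alpha> * (h i / t1 i)" "\<lambda>j. \<beta> * (h j / t2 j)"]
  have "(\<Sum>k<n. h k) = (\<Sum>i\<in>S. h i) + (\<Sum>j\<in>{..<n} - S. h j)"
    using sum.subset_diff[OF S finite_lessThan, of h] by linarith
  also have "\<dots> = (\<Sum>i\<in>S. t1 i / \<alpha> * (\<alpha> * (h i / t1 i))) + (\<Sum>j\<in>{..<n} - S. t2 j / \<beta> * (\<beta> * (h j / t2 j)))"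
    using assms by (intro arg_cong2[where f="(+)"] sum.cong) (auto simp: subsetD)
  finally show ?thesis
    using mixture by simp
qed

lemma Cn_exp_makespan_le_split:
  assumes Cn: "Cn n P" and phi_le: "\<And>x y. 0 < x \<Longrightarrow> 0 < y \<Longrightarrow> phi P x y \<le> c"
    and pos: "pos_matrix n t1 t2" and S: "S \<subseteq> {..<n}" "S \<noteq> {}" "{..<n} - S \<noteq> {}"
  shows "exp_makespan n P t1 t2 \<le> makespan n t1 t2 S * c"
proof -
  define S' where "S' = {..<n} - S"
  define \<alpha> where "\<alpha> = sum t1 S"
  define \<beta> where "\<beta> = sum t2 S'"
  define w where "w \<kappa> = t1 (fst \<kappa>) / \<alpha> * (t2 (snd \<kappa>) / \<beta>)" for \<kappa>
  have t_pos: "0 < t1 k" "0 < t2 k" if "k < n" for k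
    using pos that by (auto simp: pos_matrix_def)
  have t_nz: "t1 k \<noteq> 0" "t2 k \<noteq> 0" if "k < n" for k
    using t_pos[OF that] by auto
  have in_S: "k < n" if "k \<in> S" for k
    using that S(1) by blast
  have fin: "finite S" "finite S'"
    using S(1) finite_subset unfolding S'_def by auto
  have "0 < \<alpha>" "0 < \<beta>"
    unfolding \<alpha>_def \<beta>_def S'_def using fin S t_pos by (auto intro!: sum_pos)
  have load: "(\<Sum>k<n. h k) = (\<Sum>\<kappa>\<in>S \<times> S'. w \<kappa> *
      (\<alpha> * (h (fst \<kappa>) / t1 (fst \<kappa>)) + \<beta> * (h (snd \<kappa>) / t2 (snd \<kappa>))))" for h
    unfolding w_def \<alpha>_def \<beta>_def S'_def using S(1) t_nz \<open>0 < \<alpha>\<close> \<open>0 < \<beta>\<close>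
    by (intro sum_eq_product_mixture) (simp_all add: \<alpha>_def \<beta>_def S'_def)
  have "sum w (S \<times> S') = (\<Sum>i\<in>S. t1 i / \<alpha>) * (\<Sum>j\<in>S'. t2 j / \<beta>)"
    unfolding w_def by (simp add: sum.cartesian_product split_beta sum_product)
  then have w_sum: "sum w (S \<times> S') = 1"
    using \<open>0 < \<alpha>\<close> \<open>0 < \<beta>\<close> by (simp add: sum_divide_distrib[symmetric] \<alpha>_def \<beta>_def)
  have w_nonneg: "0 \<le> w \<kappa>" if "\<kappa> \<in> S \<times> S'" for \<kappa>
    using that S(1) \<open>0 < \<alpha>\<close> \<open>0 < \<beta>\<close> t_pos unfolding w_def S'_def
    by (auto intro!: mult_nonneg_nonneg less_imp_le)
  have "exp_makespan n P t1 t2 \<le> max \<alpha> \<beta> * c"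
  proof (rule Cn_exp_makespan_le_mixture[OF Cn, where K="S \<times> S'" and i=fst and j=snd and w=w
          and x="\<lambda>\<kappa>. t1 (fst \<kappa>) / t2 (fst \<kappa>)" and y="\<lambda>\<kappa>. t1 (snd \<kappa>) / t2 (snd \<kappa>)"])
    show "(\<Sum>k<n. t1 k * of_bool (t1 k / t2 k < z k)) = (\<Sum>\<kappa>\<in>S \<times> S'. w \<kappa> *
      (\<alpha> * of_bool (t1 (fst \<kappa>) / t2 (fst \<kappa>) < z (fst \<kappa>))
        + \<beta> * (t1 (snd \<kappa>) / t2 (snd \<kappa>) * of_bool (t1 (snd \<kappa>) / t2 (snd \<kappa>) < z (snd \<kappa>)))))" for z
      unfolding load by (intro sum.cong) (auto simp: S'_def t_nz in_S)
    show "(\<Sum>k<n. t2 k * of_bool (\<not> t1 k / t2 k < z k)) = (\<Sum>\<kappa>\<in>S \<times> S'. w \<kappa> *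
      (\<alpha> * (of_bool (\<not> t1 (fst \<kappa>) / t2 (fst \<kappa>) < z (fst \<kappa>)) / (t1 (fst \<kappa>) / t2 (fst \<kappa>)))
        + \<beta> * of_bool (\<not> t1 (snd \<kappa>) / t2 (snd \<kappa>) < z (snd \<kappa>))))" for z
      unfolding load by (intro sum.cong) (auto simp: S'_def t_nz in_S)
  qed (use fin w_sum w_nonneg phi_le S(1) t_pos \<open>0 < \<alpha>\<close> \<open>0 < \<beta>\<close> in \<open>auto simp: S'_def\<close>)
  then show ?thesis
    by (simp add: makespan_def \<alpha>_def \<beta>_def S'_def)
qed

lemma Cn_exp_makespan_le_machine2_only:
  assumes Cn: "Cn n P" and n: "2 \<le> n" and phi_le: "\<And>x y. 0 < x \<Longrightarrow> 0 < y \<Longrightarrow> phi P x y \<le> c"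
    and pos: "pos_matrix n t1 t2"
  shows "exp_makespan n P t1 t2 \<le> makespan n t1 t2 {} * c"
proof -
  define \<beta> where "\<beta> = sum t2 {..<n}"
  have t_pos: "0 < t1 k" "0 < t2 k" if "k < n" for k
    using pos that by (auto simp: pos_matrix_def)
  have "0 < \<beta>"
    unfolding \<beta>_def using n t_pos by (intro sum_pos) (auto simp: lessThan_empty_iff)
  have "exp_makespan n P t1 t2 \<le> max 0 \<beta> * c"
  proof (rule Cn_exp_makespan_le_mixture[OF Cn, where K="{..<n}" and w="\<lambda>k. t2 k / \<beta>"
        and i="\<lambda>k. if k = 0 then 1 else 0" and j="\<lambda>k. k" and x="\<lambda>_. 1" and y="\<lambda>k. t1 k / t2 k" and \<alpha>=0])
    show "(\<Sum>k<n. t1 k * of_bool (t1 k / t2 k < z k)) = (\<Sum>k<n. t2 k / \<beta> *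
      (0 * of_bool (1 < z (if k = 0 then 1 else 0)) + \<beta> * (t1 k / t2 k * of_bool (t1 k / t2 k < z k))))"
      for z
      using t_pos \<open>0 < \<beta>\<close> by (intro sum.cong) (auto simp: less_imp_neq[symmetric])
    show "(\<Sum>k<n. t2 k * of_bool (\<not> t1 k / t2 k < z k)) = (\<Sum>k<n. t2 k / \<beta> *
      (0 * (of_bool (\<not> 1 < z (if k = 0 then 1 else 0)) / 1) + \<beta> * of_bool (\<not> t1 k / t2 k < z k)))"
      for z
      using \<open>0 < \<beta>\<close> by (intro sum.cong) auto
  qed (use n phi_le t_pos \<open>0 < \<beta>\<close> in
      \<open>auto simp: \<beta>_def sum_divide_distrib[symmetric] intro: divide_nonneg_pos less_imp_le\<close>)
  then show ?thesis
    by (simp add: makespan_def \<beta>_def)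
qed

lemma Cn_exp_makespan_le_machine1_only:
  assumes Cn: "Cn n P" and n: "2 \<le> n" and phi_le: "\<And>x y. 0 < x \<Longrightarrow> 0 < y \<Longrightarrow> phi P x y \<le> c"
    and pos: "pos_matrix n t1 t2"
  shows "exp_makespan n P t1 t2 \<le> makespan n t1 t2 {..<n} * c"
proof -
  define \<alpha> where "\<alpha> = sum t1 {..<n}"
  have t_pos: "0 < t1 k" "0 < t2 k" if "k < n" for k
    using pos that by (auto simp: pos_matrix_def)
  have "0 < \<alpha>"
    unfolding \<alpha>_def using n t_pos by (intro sum_pos) (auto simp: lessThan_empty_iff)
  have "exp_makespan n P t1 t2 \<le> max \<alpha> 0 * c"
  proof (rule Cn_exp_makespan_le_mixture[OF Cn, where K="{..<n}" and w="\<lambda>k. t1 k / \<alpha>"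
        and i="\<lambda>k. k" and j="\<lambda>k. if k = 0 then 1 else 0" and x="\<lambda>k. t1 k / t2 k" and y="\<lambda>_. 1" and \<beta>=0])
    show "(\<Sum>k<n. t1 k * of_bool (t1 k / t2 k < z k)) = (\<Sum>k<n. t1 k / \<alpha> *
      (\<alpha> * of_bool (t1 k / t2 k < z k) + 0 * (1 * of_bool (1 < z (if k = 0 then 1 else 0)))))"
      for z
      using \<open>0 < \<alpha>\<close> by (intro sum.cong) auto
    show "(\<Sum>k<n. t2 k * of_bool (\<not> t1 k / t2 k < z k)) = (\<Sum>k<n. t1 k / \<alpha> *
      (\<alpha> * (of_bool (\<not> t1 k / t2 k < z k) / (t1 k / t2 k)) + 0 * of_bool (\<not> 1 < z (if k = 0 then 1 else 0))))"
      for z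
      using t_pos \<open>0 < \<alpha>\<close> by (intro sum.cong) (auto simp: less_imp_neq[symmetric])
  qed (use n phi_le t_pos \<open>0 < \<alpha>\<close> in
      \<open>auto simp: \<alpha>_def sum_divide_distrib[symmetric] intro: divide_nonneg_pos less_imp_le\<close>)
  then show ?thesis
    by (simp add: makespan_def \<alpha>_def)
qed

lemma Cn_exp_makespan_le_makespan:
  assumes Cn: "Cn n P" and n: "2 \<le> n" and phi_le: "\<And>x y. 0 < x \<Longrightarrow> 0 < y \<Longrightarrow> phi P x y \<le> c"
    and pos: "pos_matrix n t1 t2" and S: "S \<subseteq> {..<n}"
  shows "exp_makespan n P t1 t2 \<le> makespan n t1 t2 S * c"
proof -
  consider "S = {}" | "S = {..<n}" | "S \<noteq> {}" "{..<n} - S \<noteq> {}"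
    using S by blast
  then show ?thesis
  proof cases
    case 1
    then show ?thesis using Cn_exp_makespan_le_machine2_only[OF Cn n phi_le pos] by simp
  next
    case 2
    then show ?thesis using Cn_exp_makespan_le_machine1_only[OF Cn n phi_le pos] by simp
  next
    case 3
    then show ?thesis using Cn_exp_makespan_le_split[OF Cn phi_le pos S] by simp
  qed
qed

lemma opt_makespan_attained:
  obtains S where "S \<subseteq> {..<n}" "opt_makespan n t1 t2 = makespan n t1 t2 S"
proof -
  have "opt_makespan n t1 t2 \<in> makespan n t1 t2 ` Pow {..<n}"
    unfolding opt_makespan_def by (rule Min_in) auto
  then show ?thesis using that by auto
qed

lemma opt_makespan_le: "S \<subseteq> {..<n} \<Longrightarrow> opt_makespan n t1 t2 \<le> makespan n t1 t2 S"
  unfolding opt_makespan_def by (intro Min_le) auto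

lemma opt_makespan_pos:
  assumes "0 < n" "pos_matrix n t1 t2"
  shows "0 < opt_makespan n t1 t2"
proof -
  obtain S where S: "S \<subseteq> {..<n}" "opt_makespan n t1 t2 = makespan n t1 t2 S"
    by (rule opt_makespan_attained)
  have "finite S"
    using S(1) finite_subset by blast
  have "0 < (\<Sum>j\<in>S. t1 j) \<or> 0 < (\<Sum>j\<in>{..<n} - S. t2 j)"
  proof (cases "S = {}")
    case True
    then show ?thesis
      using assms by (auto simp: pos_matrix_def lessThan_empty_iff intro!: sum_pos)
  next
    case False
    then show ?thesis
      using assms S(1) \<open>finite S\<close> by (auto simp: pos_matrix_def intro!: sum_pos)
  qed
  then show ?thesis
    using S(2) by (auto simp: makespan_def)
qed

lemma Cn_approx_ratio_le:
  assumes Cn: "Cn n P" and n: "2 \<le> n" and phi_le: "\<And>x y. 0 < x \<Longrightarrow> 0 < y \<Longrightarrow> phi P x y \<le> c"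
  shows "approx_ratio n P \<le> ereal c"
  unfolding approx_ratio_def
proof (rule SUP_least, clarsimp)
  fix t1 t2 assume pos: "pos_matrix n t1 t2"
  obtain S where S: "S \<subseteq> {..<n}" "opt_makespan n t1 t2 = makespan n t1 t2 S"
    by (rule opt_makespan_attained)
  have "0 < opt_makespan n t1 t2"
    using n pos by (intro opt_makespan_pos) auto
  moreover have "exp_makespan n P t1 t2 \<le> opt_makespan n t1 t2 * c"
    unfolding S(2) by (rule Cn_exp_makespan_le_makespan[OF Cn n phi_le pos S(1)])
  ultimately show "exp_makespan n P t1 t2 / opt_makespan n t1 t2 \<le> c"
    by (simp add: divide_le_eq mult.commute)
qed

definition pair_instance1 :: "real \<Rightarrow> real \<Rightarrow> nat \<Rightarrow> real" where
  "pair_instance1 y \<delta> k = (if k = 0 then 1 else if k = 1 then y else \<delta>)"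

definition pair_instance2 :: "real \<Rightarrow> real \<Rightarrow> nat \<Rightarrow> real" where
  "pair_instance2 x \<delta> k = (if k = 0 then 1 / x else if k = 1 then 1 else \<delta>)"

lemma pos_matrix_pair_instance:
  "0 < x \<Longrightarrow> 0 < y \<Longrightarrow> 0 < \<delta> \<Longrightarrow> pos_matrix n (pair_instance1 y \<delta>) (pair_instance2 x \<delta>)"
  by (auto simp: pos_matrix_def pair_instance1_def pair_instance2_def)

lemma Cn_phi_le_exp_makespan_pair_instance:
  assumes Cn: "Cn n P" and n: "2 \<le> n" and xy\<delta>: "0 < x" "0 < y" "0 < \<delta>"
  shows "phi P x y \<le> exp_makespan n P (pair_instance1 y \<delta>) (pair_instance2 x \<delta>)"
proof -
  let ?t1 = "pair_instance1 y \<delta>" and ?t2 = "pair_instance2 x \<delta>"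
  have integral: "has_bochner_integral P (\<lambda>z. pair_makespan x y (z 0) (z 1)) (phi P x y)"
    using n xy\<delta> by (intro Cn_has_integral_pair_makespan[OF Cn]) auto
  have pointwise: "pair_makespan x y (z 0) (z 1) \<le> makespan n ?t1 ?t2 (alloc n ?t1 ?t2 z)" for z
  proof -
    have "(\<Sum>k\<in>{0, 1}. f k) \<le> (\<Sum>k<n. f k)" if "\<And>k. 0 \<le> f k" for f :: "nat \<Rightarrow> real"
      using that n by (intro sum_mono2) auto
    from this[of "\<lambda>k. ?t1 k * of_bool (?t1 k / ?t2 k < z k)"]
      this[of "\<lambda>k. ?t2 k * of_bool (\<not> ?t1 k / ?t2 k < z k)"]
    show ?thesis
      using xy\<delta> unfolding makespan_alloc pair_makespan_def
      by (intro max.mono) (auto simp del: sum_mult_of_bool_eq simp: pair_instance1_def pair_instance2_def)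
  qed
  show ?thesis
    unfolding exp_makespan_def has_bochner_integral_integral_eq[OF integral, symmetric]
    by (intro integral_mono integrable.intros[OF integral] Cn_integrable_makespan_alloc[OF Cn] pointwise)
qed

lemma opt_makespan_pair_instance_le:
  assumes n: "2 \<le> n" and "0 < \<delta>"
  shows "opt_makespan n (pair_instance1 y \<delta>) (pair_instance2 x \<delta>) \<le> 1 + real n * \<delta>"
proof -
  define S where "S = {..<n} - {1}"
  have "(\<Sum>j\<in>S. pair_instance1 y \<delta> j) = 1 + (\<Sum>j\<in>S - {0}. \<delta>)"
    using n by (subst sum.remove[of S 0]) (auto simp: S_def pair_instance1_def intro!: sum.cong)
  also have "\<dots> \<le> 1 + real n * \<delta>"
    using \<open>0 < \<delta>\<close> card_mono[of "{..<n}" "S - {0}"] by (auto simp: S_def intro!: mult_right_mono)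
  finally have "makespan n (pair_instance1 y \<delta>) (pair_instance2 x \<delta>) S \<le> 1 + real n * \<delta>"
    using n \<open>0 < \<delta>\<close> by (simp add: makespan_def S_def Diff_Diff_Int pair_instance2_def)
  moreover have "opt_makespan n (pair_instance1 y \<delta>) (pair_instance2 x \<delta>)
      \<le> makespan n (pair_instance1 y \<delta>) (pair_instance2 x \<delta>) S"
    by (rule opt_makespan_le) (simp add: S_def)
  ultimately show ?thesis
    by linarith
qed

lemma Cn_phi_le_approx_ratio:
  assumes Cn: "Cn n P" and n: "2 \<le> n" and xy: "0 < x" "0 < y"
  shows "ereal (phi P x y) \<le> approx_ratio n P"
proof (rule ereal_le_real)
  fix c assume ratio_le: "approx_ratio n P \<le> ereal c"
  have bound: "phi P x y / (1 + real n * \<delta>) \<le> c" if "0 < \<delta>" for \<delta>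
  proof -
    let ?t1 = "pair_instance1 y \<delta>" and ?t2 = "pair_instance2 x \<delta>"
    have "0 < opt_makespan n ?t1 ?t2"
      using n xy that by (intro opt_makespan_pos pos_matrix_pair_instance) auto
    then have "phi P x y / (1 + real n * \<delta>) \<le> exp_makespan n P ?t1 ?t2 / opt_makespan n ?t1 ?t2"
      using opt_makespan_pair_instance_le[OF n that] Cn_phi_le_exp_makespan_pair_instance[OF Cn n xy that]
        Cn_phi_nonneg[OF Cn n xy]
      by (intro frac_le) auto
    then have "ereal (phi P x y / (1 + real n * \<delta>)) \<le> ereal (exp_makespan n P ?t1 ?t2 / opt_makespan n ?t1 ?t2)"
      by simp
    also have "\<dots> \<le> approx_ratio n P"
      unfolding approx_ratio_def
      by (rule SUP_upper2[of "(?t1, ?t2)"]) (use xy that pos_matrix_pair_instance in auto)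
    also note ratio_le
    finally show ?thesis
      by simp
  qed
  have "((\<lambda>\<delta>. phi P x y / (1 + real n * \<delta>)) \<longlongrightarrow> phi P x y) (at_right 0)"
    by (auto intro!: tendsto_eq_intros)
  moreover have "eventually (\<lambda>\<delta>. phi P x y / (1 + real n * \<delta>) \<le> c) (at_right 0)"
    using bound by (intro eventually_at_rightI[of 0 1]) auto
  ultimately have "phi P x y \<le> c"
    by (rule tendsto_upperbound) simp
  then show "ereal (phi P x y) \<le> ereal c"
    by simp
qed

theorem theorem5:
  fixes n :: nat and P :: "(nat \<Rightarrow> real) measure"
  assumes "n \<ge> 2" and "Cn n P"
  shows "approx_ratio n P = (SUP xy\<in>{xy::real\<times>real. 0 < fst xy \<and> 0 < snd xy}.
             ereal (phi P (fst xy) (snd xy)))"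
proof (rule antisym)
  show "approx_ratio n P \<le> (SUP xy\<in>{xy. 0 < fst xy \<and> 0 < snd xy}. ereal (phi P (fst xy) (snd xy)))"
  proof (rule ereal_le_real)
    fix c assume "(SUP xy\<in>{xy. 0 < fst xy \<and> 0 < snd xy}. ereal (phi P (fst xy) (snd xy))) \<le> ereal c"
    then have "phi P x y \<le> c" if "0 < x" "0 < y" for x y
      using that by (auto simp: SUP_le_iff)
    then show "approx_ratio n P \<le> ereal c"
      by (rule Cn_approx_ratio_le[OF assms(2,1)])
  qed
  show "(SUP xy\<in>{xy. 0 < fst xy \<and> 0 < snd xy}. ereal (phi P (fst xy) (snd xy))) \<le> approx_ratio n P"
    using Cn_phi_le_approx_ratio[OF assms(2,1)] by (auto intro!: SUP_least)
qed

end
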